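(* Let $N\ge 2$ and $d_0,\dots,d_N,p_1,\dots,p_N,q_0,\dots,q_N\ge 1$ be integers, $d=\sum_{i=0}^N d_i$, $p=\sum_{i=1}^N p_i$, $\mathcal{X}=\prod_{i=0}^N\mathcal{X}_i$ with $\mathcal{X}_i\subset\mathbb{R}^{d_i}$, and $\mathcal{Y}=\prod_{i=1}^N\mathcal{Y}_i$ with $\mathcal{Y}_i\subset\mathbb{R}^{p_i}$. Let $f:\mathcal{X}\to\mathbb{R}$, $g_0:\mathcal{X}\to\mathbb{R}^{q_0}$, $g_i:\mathcal{X}_0\times\mathcal{X}_i\to\mathbb{R}^{q_i}$, $g(\mathbf{x})=(g_0(\mathbf{x}),g_1(\mathbf{x}_0,\mathbf{x}_1),\dots,g_N(\mathbf{x}_0,\mathbf{x}_N))$. For $i\in\{1,\dots,N\}$ let $\mathbf{a}_i\in\mathbb{R}^{p_i}$, $\mathbf{B}_{i,0}\in\mathbb{R}^{p_i\times d_0}$, $\mathbf{B}_{i,i}\in\mathbb{R}^{p_i\times d_i}$, and $\mathbf{C}_{i,j}\in\mathbb{R}^{p_i\times p_j}$ for $j\ne i$, and define the linear coupling functions $h_i(\mathbf{x}_0,\mathbf{x}_i,\mathbf{y}_{-i})=\mathbf{a}_i-\mathbf{B}_{i,0}\mathbf{x}_0-\mathbf{B}_{i,i}\mathbf{x}_i+\sum_{j\ne i}\mathbf{C}_{i,j}\mathbf{y}_j$, with $h=(h_1,\dots,h_N)$. The system $\mathbf{y}=h(\mathbf{x},\mathbf{y})$ reads $\mathbf{C}\mathbf{y}=\mathbf{a}-\mathbf{B}\mathbf{x}$,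 where $\mathbf{a}=(\mathbf{a}_1;\dots;\mathbf{a}_N)$, $\mathbf{B}$ is the $p\times d$ block matrix whose block row $i$ is $(\mathbf{B}_{i,0},0,\dots,0,\mathbf{B}_{i,i},0,\dots,0)$ (with $\mathbf{B}_{i,i}$ in block column $i$, block columns indexed $0,\dots,N$), and $\mathbf{C}=\mathbf{I}_p-\mathbf{K}$ with $\mathbf{K}$ the $p\times p$ block matrix with zero diagonal blocks and off-diagonal blocks $\mathbf{C}_{i,j}$. Assume $\mathbf{C}$ is invertible. Let $\mathcal{S}=\{(\mathbf{x},\mathbf{y})\in\mathcal{X}\times\mathcal{Y}:\mathbf{y}=h(\mathbf{x},\mathbf{y})\}$, and let $L:\mathcal{X}\times\mathcal{Y}\to\mathbb{R}^d$ satisfy $L(\mathbf{x},\mathbf{y})=\mathbf{x}$ for all $(\mathbf{x},\mathbf{y})\in\mathcal{S}$, with $\tilde f=f\circ L$, $\tilde g=g\circ L$ defined on $\mathcal{X}\times\mathcal{Y}$. Consider (P): minimize $f(\mathbf{x})$ subject to $g_0(\mathbf{x})\le 0$, $g_i(\mathbf{x}_0,\mathbf{x}_i)\le0$ ($1\le i\le N$); and (MDO): minimize $\tilde f(\mathbf{x},\mathbf{y})$ over $(\mathbf{x},\mathbf{y})\in\mathcal{X}\times\mathcal{Y}$ subject to $\tilde g(\mathbf{x},\mathbf{y})\le0$ and $\mathbf{y}_i=h_i(\mathbf{x}_0,\mathbf{x}_i,\mathbf{y}_{-i})$ ($1\le i\le N$). Then (MDO) is equivalent to (P) on $\Pi_{\mathcal{X}}(\mathcal{S})=\{\mathbf{x}\in\mathcal{X}:\mathbf{C}^{-1}(\mathbf{a}-\mathbf{B}\mathbf{x})\in\mathcal{Y}\}$,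 i.e. $(\mathbf{x},\mathbf{y})$ is a solution of (MDO) iff $(\mathbf{x},\mathbf{y})\in\mathcal{S}$ and $\mathbf{x}$ is a solution of (P) over this set. Moreover, writing $\boldsymbol{\beta}=-\mathbf{C}^{-1}\mathbf{B}$ in blocks $\boldsymbol{\beta}_{i,j}\in\mathbb{R}^{p_i\times d_j}$ ($1\le i\le N$, $0\le j\le N$) and $\boldsymbol{\alpha}=\mathbf{C}^{-1}\mathbf{a}=(\boldsymbol{\alpha}_1;\dots;\boldsymbol{\alpha}_N)$, and assuming $p_i=d_i$ for $1\le i\le N$, the function $L(\mathbf{x},\mathbf{y})=\big(\mathbf{x}_0,\ \mathbf{x}_1+\mathbf{y}_1-\boldsymbol{\alpha}_1-\sum_{j=0}^N\boldsymbol{\beta}_{1,j}\mathbf{x}_j,\ \dots,\ \mathbf{x}_N+\mathbf{y}_N-\boldsymbol{\alpha}_N-\sum_{j=0}^N\boldsymbol{\beta}_{N,j}\mathbf{x}_j\big)$ satisfies $L(\mathbf{x},\mathbf{y})=\mathbf{x}$ for all $(\mathbf{x},\mathbf{y})\in\mathcal{S}$.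
   Context: "Solution" means a global minimizer among feasible points; inequalities are componentwise. $\mathbf{x}=(\mathbf{x}_0,\dots,\mathbf{x}_N)$ with $\mathbf{x}_i\in\mathbb{R}^{d_i}$, $\mathbf{y}=(\mathbf{y}_1,\dots,\mathbf{y}_N)$ with $\mathbf{y}_i\in\mathbb{R}^{p_i}$, $\mathbf{y}_{-i}=(\mathbf{y}_j)_{j\ne i}$. *)

theory Defs
  imports Main "HOL.Real"
begin

text \<open>A vector in R^n is a function nat => real vanishing from index n on.
An m x n matrix is a function nat => nat => real (row, column); only entries
with row < m and column < n are used. A block vector such as x = (x_0,...,x_N)
is a function nat => (nat => real), block i being x i; blocks outside the index
set are the zero function. Block matrices are indexed by block row, block column,
row, column.\<close>

type_synonym vec = "nat \<Rightarrow> real"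
type_synonym mat = "nat \<Rightarrow> nat \<Rightarrow> real"
type_synonym bvec = "nat \<Rightarrow> vec"
type_synonym bmat = "nat \<Rightarrow> nat \<Rightarrow> mat"

definition rvec :: "nat \<Rightarrow> vec set" where
  "rvec n = {v. \<forall>k\<ge>n. v k = 0}"

definition mv :: "nat \<Rightarrow> nat \<Rightarrow> mat \<Rightarrow> vec \<Rightarrow> vec" where
  "mv m n M v = (\<lambda>r. if r < m then (\<Sum>c<n. M r c * v c) else 0)"

definition nonpos :: "nat \<Rightarrow> vec \<Rightarrow> bool" where
  "nonpos q v \<longleftrightarrow> (\<forall>k<q. v k \<le> 0)"

definition prodset :: "nat set \<Rightarrow> (nat \<Rightarrow> vec set) \<Rightarrow> bvec set" where
  "prodset I A = {x. (\<forall>i\<in>I. x i \<in> A i) \<and> (\<forall>i. i \<notin> I \<longrightarrow> x i = (\<lambda>_. 0))}"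

definition bmv :: "nat set \<Rightarrow> nat set \<Rightarrow> (nat \<Rightarrow> nat) \<Rightarrow> (nat \<Rightarrow> nat) \<Rightarrow> bmat \<Rightarrow> bvec \<Rightarrow> bvec" where
  "bmv Irow Icol m n M v =
     (\<lambda>i. if i \<in> Irow then (\<lambda>r. \<Sum>j\<in>Icol. mv (m i) (n j) (M i j) (v j) r) else (\<lambda>_. 0))"

definition bprod :: "nat set \<Rightarrow> (nat \<Rightarrow> nat) \<Rightarrow> bmat \<Rightarrow> bmat \<Rightarrow> bmat" where
  "bprod K dk M D = (\<lambda>i j r c. \<Sum>k\<in>K. \<Sum>s<dk k. M i k r s * D k j s c)"

definition is_bident :: "nat \<Rightarrow> (nat \<Rightarrow> nat) \<Rightarrow> bmat \<Rightarrow> bool" where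
  "is_bident N p M \<longleftrightarrow> (\<forall>i\<in>{1..N}. \<forall>j\<in>{1..N}. \<forall>r<p i. \<forall>c<p j.
      M i j r c = (if i = j \<and> r = c then 1 else 0))"

definition Cmat :: "bmat \<Rightarrow> bmat" where
  "Cmat Cm = (\<lambda>i j r c. (if i = j \<and> r = c then 1 else 0) - (if i \<noteq> j then Cm i j r c else 0))"

definition Bmat :: "(nat \<Rightarrow> mat) \<Rightarrow> (nat \<Rightarrow> mat) \<Rightarrow> bmat" where
  "Bmat B0 Bii = (\<lambda>i j. if j = 0 then B0 i else if j = i then Bii i else (\<lambda>_ _. 0))"

definition hcpl :: "nat \<Rightarrow> (nat \<Rightarrow> nat) \<Rightarrow> (nat \<Rightarrow> nat) \<Rightarrow> bvec \<Rightarrow> (nat \<Rightarrow> mat) \<Rightarrow> (nat \<Rightarrow> mat)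
     \<Rightarrow> bmat \<Rightarrow> nat \<Rightarrow> bvec \<Rightarrow> bvec \<Rightarrow> vec" where
  "hcpl N d p a B0 Bii Cm i x y =
     (\<lambda>r. a i r - mv (p i) (d 0) (B0 i) (x 0) r - mv (p i) (d i) (Bii i) (x i) r
          + (\<Sum>j\<in>{1..N} - {i}. mv (p i) (p j) (Cm i j) (y j) r))"

definition Sset :: "nat \<Rightarrow> (nat \<Rightarrow> nat) \<Rightarrow> (nat \<Rightarrow> nat) \<Rightarrow> (nat \<Rightarrow> vec set) \<Rightarrow> (nat \<Rightarrow> vec set)
     \<Rightarrow> bvec \<Rightarrow> (nat \<Rightarrow> mat) \<Rightarrow> (nat \<Rightarrow> mat) \<Rightarrow> bmat \<Rightarrow> (bvec \<times> bvec) set" where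
  "Sset N d p X Y a B0 Bii Cm =
     {(x, y). x \<in> prodset {0..N} X \<and> y \<in> prodset {1..N} Y \<and>
              (\<forall>i\<in>{1..N}. y i = hcpl N d p a B0 Bii Cm i x y)}"

definition gfeas :: "nat \<Rightarrow> (nat \<Rightarrow> nat) \<Rightarrow> (bvec \<Rightarrow> vec) \<Rightarrow> (nat \<Rightarrow> vec \<Rightarrow> vec \<Rightarrow> vec) \<Rightarrow> bvec \<Rightarrow> bool" where
  "gfeas N q g0 g x \<longleftrightarrow> nonpos (q 0) (g0 x) \<and> (\<forall>i\<in>{1..N}. nonpos (q i) (g i (x 0) (x i)))"

definition P_sol_on :: "nat \<Rightarrow> (nat \<Rightarrow> nat) \<Rightarrow> (bvec \<Rightarrow> real) \<Rightarrow> (bvec \<Rightarrow> vec)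
     \<Rightarrow> (nat \<Rightarrow> vec \<Rightarrow> vec \<Rightarrow> vec) \<Rightarrow> bvec set \<Rightarrow> bvec \<Rightarrow> bool" where
  "P_sol_on N q f g0 g D x \<longleftrightarrow> x \<in> D \<and> gfeas N q g0 g x \<and>
     (\<forall>x'\<in>D. gfeas N q g0 g x' \<longrightarrow> f x \<le> f x')"

definition MDO_feas :: "nat \<Rightarrow> (nat \<Rightarrow> nat) \<Rightarrow> (nat \<Rightarrow> nat) \<Rightarrow> (nat \<Rightarrow> nat) \<Rightarrow> (nat \<Rightarrow> vec set)
     \<Rightarrow> (nat \<Rightarrow> vec set) \<Rightarrow> (bvec \<Rightarrow> vec) \<Rightarrow> (nat \<Rightarrow> vec \<Rightarrow> vec \<Rightarrow> vec)
     \<Rightarrow> bvec \<Rightarrow> (nat \<Rightarrow> mat) \<Rightarrow> (nat \<Rightarrow> mat) \<Rightarrow> bmat \<Rightarrow> (bvec \<Rightarrow> bvec \<Rightarrow> bvec)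
     \<Rightarrow> bvec \<Rightarrow> bvec \<Rightarrow> bool" where
  "MDO_feas N d p q X Y g0 g a B0 Bii Cm L x y \<longleftrightarrow>
     x \<in> prodset {0..N} X \<and> y \<in> prodset {1..N} Y \<and> gfeas N q g0 g (L x y) \<and>
     (\<forall>i\<in>{1..N}. y i = hcpl N d p a B0 Bii Cm i x y)"

definition MDO_sol :: "nat \<Rightarrow> (nat \<Rightarrow> nat) \<Rightarrow> (nat \<Rightarrow> nat) \<Rightarrow> (nat \<Rightarrow> nat) \<Rightarrow> (nat \<Rightarrow> vec set)
     \<Rightarrow> (nat \<Rightarrow> vec set) \<Rightarrow> (bvec \<Rightarrow> real) \<Rightarrow> (bvec \<Rightarrow> vec) \<Rightarrow> (nat \<Rightarrow> vec \<Rightarrow> vec \<Rightarrow> vec)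
     \<Rightarrow> bvec \<Rightarrow> (nat \<Rightarrow> mat) \<Rightarrow> (nat \<Rightarrow> mat) \<Rightarrow> bmat \<Rightarrow> (bvec \<Rightarrow> bvec \<Rightarrow> bvec)
     \<Rightarrow> bvec \<Rightarrow> bvec \<Rightarrow> bool" where
  "MDO_sol N d p q X Y f g0 g a B0 Bii Cm L x y \<longleftrightarrow>
     MDO_feas N d p q X Y g0 g a B0 Bii Cm L x y \<and>
     (\<forall>x' y'. MDO_feas N d p q X Y g0 g a B0 Bii Cm L x' y' \<longrightarrow> f (L x y) \<le> f (L x' y'))"

definition PiX :: "nat \<Rightarrow> (nat \<Rightarrow> nat) \<Rightarrow> (nat \<Rightarrow> nat) \<Rightarrow> (nat \<Rightarrow> vec set) \<Rightarrow> (nat \<Rightarrow> vec set)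
     \<Rightarrow> bvec \<Rightarrow> (nat \<Rightarrow> mat) \<Rightarrow> (nat \<Rightarrow> mat) \<Rightarrow> bmat \<Rightarrow> bvec set" where
  "PiX N d p X Y a B0 Bii Cinv =
     {x \<in> prodset {0..N} X.
        bmv {1..N} {1..N} p p Cinv
            (\<lambda>i r. a i r - bmv {1..N} {0..N} p d (Bmat B0 Bii) x i r) \<in> prodset {1..N} Y}"

definition beta :: "nat \<Rightarrow> (nat \<Rightarrow> nat) \<Rightarrow> (nat \<Rightarrow> mat) \<Rightarrow> (nat \<Rightarrow> mat) \<Rightarrow> bmat \<Rightarrow> bmat" where
  "beta N p B0 Bii Cinv = (\<lambda>i j r c. - bprod {1..N} p Cinv (Bmat B0 Bii) i j r c)"

definition alpha :: "nat \<Rightarrow> (nat \<Rightarrow> nat) \<Rightarrow> bvec \<Rightarrow> bmat \<Rightarrow> bvec" where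
  "alpha N p a Cinv = bmv {1..N} {1..N} p p Cinv a"

definition Lspec :: "nat \<Rightarrow> (nat \<Rightarrow> nat) \<Rightarrow> (nat \<Rightarrow> nat) \<Rightarrow> bvec \<Rightarrow> (nat \<Rightarrow> mat) \<Rightarrow> (nat \<Rightarrow> mat)
     \<Rightarrow> bmat \<Rightarrow> bvec \<Rightarrow> bvec \<Rightarrow> bvec" where
  "Lspec N d p a B0 Bii Cinv x y =
     (\<lambda>i. if i = 0 then x 0
          else if i \<in> {1..N} then
            (\<lambda>r. x i r + y i r - alpha N p a Cinv i r
                 - (\<Sum>j\<in>{0..N}. mv (p i) (d j) (beta N p B0 Bii Cinv i j) (x j) r))
          else (\<lambda>_. 0))"

end

theory Submission
  imports Defs
begin

text \<open>Since \<open>C\<close> is invertible, the coupling equations \<open>y = h(x, y)\<close>, i.e. \<open>C y = a - B x\<close>,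
  have the unique solution \<open>y = C\<^sup>-\<^sup>1 (a - B x) = \<alpha> + \<beta> x\<close>. Hence \<open>S\<close> is the graph of this
  affine map over \<open>\<Pi>\<^sub>X(S)\<close>; as \<open>L\<close> is the first projection on \<open>S\<close>, minimizing
  \<open>f \<circ> L\<close> over the feasible part of \<open>S\<close> is the same as minimizing \<open>f\<close> over the feasible
  part of \<open>\<Pi>\<^sub>X(S)\<close>. On \<open>S\<close> the correction term \<open>y - \<alpha> - \<beta> x\<close> in the explicit \<open>L\<close> vanishes.\<close>

lemma sum_nested_swap:
  fixes F :: "'a \<Rightarrow> 'b \<Rightarrow> 'c \<Rightarrow> 'd \<Rightarrow> 'e::comm_monoid_add"
  assumes "finite J" "\<And>j. finite (C j)" "finite K" "\<And>k. finite (S k)"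
  shows "(\<Sum>j\<in>J. \<Sum>c\<in>C j. \<Sum>k\<in>K. \<Sum>s\<in>S k. F j c k s)
       = (\<Sum>k\<in>K. \<Sum>s\<in>S k. \<Sum>j\<in>J. \<Sum>c\<in>C j. F j c k s)"
proof -
  have "(\<Sum>j\<in>J. \<Sum>c\<in>C j. \<Sum>k\<in>K. \<Sum>s\<in>S k. F j c k s)
      = (\<Sum>(j, c)\<in>Sigma J C. \<Sum>(k, s)\<in>Sigma K S. F j c k s)"
    using assms by (subst sum.Sigma[symmetric]) (auto simp: sum.Sigma)
  also have "\<dots> = (\<Sum>(k, s)\<in>Sigma K S. \<Sum>(j, c)\<in>Sigma J C. F j c k s)"
    using sum.swap[of "\<lambda>(j, c) (k, s). F j c k s" "Sigma K S" "Sigma J C"]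
    by (simp add: case_prod_beta')
  also have "\<dots> = (\<Sum>k\<in>K. \<Sum>s\<in>S k. \<Sum>j\<in>J. \<Sum>c\<in>C j. F j c k s)"
    using assms by (subst sum.Sigma[symmetric]) (auto simp: sum.Sigma)
  finally show ?thesis .
qed

lemma bmv_cong:
  assumes "\<And>j. j \<in> J \<Longrightarrow> v j = v' j"
  shows "bmv I J m n M v = bmv I J m n M v'"
  using assms unfolding bmv_def by (intro ext) auto

lemma bmv_diff:
  "bmv I J m n M (\<lambda>j c. u j c - v j c) = (\<lambda>i r. bmv I J m n M u i r - bmv I J m n M v i r)"
proof (intro ext)
  fix i r
  show "bmv I J m n M (\<lambda>j c. u j c - v j c) i r = bmv I J m n M u i r - bmv I J m n M v i r"
    by (cases "i \<in> I \<and> r < m i") (auto simp: bmv_def mv_def right_diff_distrib sum_subtractf)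
qed

lemma bmv_uminus_left:
  "bmv I J m n (\<lambda>i j r c. - M i j r c) v = (\<lambda>i r. - bmv I J m n M v i r)"
proof (intro ext)
  fix i r
  show "bmv I J m n (\<lambda>i j r c. - M i j r c) v i r = - bmv I J m n M v i r"
    by (cases "i \<in> I \<and> r < m i") (auto simp: bmv_def mv_def sum_negf)
qed

lemma bmv_bmv:
  assumes "finite J" "finite K"
  shows "bmv I K m dk M (bmv K J dk n D v) = bmv I J m n (bprod K dk M D) v"
proof (intro ext)
  fix i r
  show "bmv I K m dk M (bmv K J dk n D v) i r = bmv I J m n (bprod K dk M D) v i r"
  proof (cases "i \<in> I \<and> r < m i")
    case True
    have "bmv I K m dk M (bmv K J dk n D v) i r
        = (\<Sum>k\<in>K. \<Sum>s<dk k. \<Sum>j\<in>J. \<Sum>c<n j. M i k r s * D k j s c * v j c)"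
      using True unfolding bmv_def mv_def
      by (auto simp: sum_distrib_left mult.assoc intro!: sum.cong)
    also have "\<dots> = (\<Sum>j\<in>J. \<Sum>c<n j. \<Sum>k\<in>K. \<Sum>s<dk k. M i k r s * D k j s c * v j c)"
      using assms by (intro sum_nested_swap[symmetric]) auto
    also have "\<dots> = bmv I J m n (bprod K dk M D) v i r"
      using True unfolding bmv_def mv_def bprod_def by (simp add: sum_distrib_right)
    finally show ?thesis .
  qed (auto simp: bmv_def mv_def)
qed

lemma bmv_bident:
  assumes "is_bident N p M"
  shows "bmv {1..N} {1..N} p p M v = (\<lambda>i r. if i \<in> {1..N} \<and> r < p i then v i r else 0)"
proof (intro ext)
  fix i r
  show "bmv {1..N} {1..N} p p M v i r = (if i \<in> {1..N} \<and> r < p i then v i r else 0)"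
  proof (cases "i \<in> {1..N} \<and> r < p i")
    case True
    have "bmv {1..N} {1..N} p p M v i r = (\<Sum>j\<in>{1..N}. \<Sum>c<p j. M i j r c * v j c)"
      using True by (simp add: bmv_def mv_def)
    also have "\<dots> = (\<Sum>j\<in>{1..N}. if j = i then v i r else 0)"
      using assms True unfolding is_bident_def
      by (intro sum.cong refl) (auto simp: if_distrib[of "\<lambda>t. t * _"] sum.delta cong: if_cong)
    also have "\<dots> = v i r"
      using True by simp
    finally show ?thesis
      using True by simp
  qed (auto simp: bmv_def mv_def)
qed

lemma bmv_bident_prodset_rvec:
  assumes "is_bident N p M" "v \<in> prodset {1..N} (\<lambda>i. rvec (p i))"
  shows "bmv {1..N} {1..N} p p M v = v"
  using assms(2) unfolding bmv_bident[OF assms(1)] prodset_def rvec_def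
  by (intro ext) (auto simp: not_less)

lemma bmv_inverse_solve:
  assumes right: "is_bident N p (bprod {1..N} p M Minv)"
    and left: "is_bident N p (bprod {1..N} p Minv M)"
    and y: "y \<in> prodset {1..N} (\<lambda>i. rvec (p i))"
    and w: "\<forall>i\<in>{1..N}. w i \<in> rvec (p i)"
  shows "(\<forall>i\<in>{1..N}. bmv {1..N} {1..N} p p M y i = w i) \<longleftrightarrow> y = bmv {1..N} {1..N} p p Minv w"
proof
  assume "\<forall>i\<in>{1..N}. bmv {1..N} {1..N} p p M y i = w i"
  then have "bmv {1..N} {1..N} p p Minv (bmv {1..N} {1..N} p p M y) = bmv {1..N} {1..N} p p Minv w"
    by (intro bmv_cong) auto
  moreover have "bmv {1..N} {1..N} p p Minv (bmv {1..N} {1..N} p p M y) = y"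
    by (simp only: bmv_bmv[OF finite_atLeastAtMost finite_atLeastAtMost] bmv_bident_prodset_rvec[OF left y])
  ultimately show "y = bmv {1..N} {1..N} p p Minv w"
    by simp
next
  assume "y = bmv {1..N} {1..N} p p Minv w"
  then have "bmv {1..N} {1..N} p p M y = bmv {1..N} {1..N} p p (bprod {1..N} p M Minv) w"
    by (simp only: bmv_bmv[OF finite_atLeastAtMost finite_atLeastAtMost])
  then show "\<forall>i\<in>{1..N}. bmv {1..N} {1..N} p p M y i = w i"
    unfolding bmv_bident[OF right] using w by (auto simp: rvec_def not_less)
qed

lemma bmv_Bmat:
  assumes "i \<in> {1..N}"
  shows "bmv {1..N} {0..N} p d (Bmat B0 Bii) x i
       = (\<lambda>r. mv (p i) (d 0) (B0 i) (x 0) r + mv (p i) (d i) (Bii i) (x i) r)"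
proof (intro ext)
  fix r
  have "bmv {1..N} {0..N} p d (Bmat B0 Bii) x i r = (\<Sum>j\<in>{0..N}. mv (p i) (d j) (Bmat B0 Bii i j) (x j) r)"
    using assms by (simp add: bmv_def)
  also have "\<dots> = (\<Sum>j\<in>{0, i}. mv (p i) (d j) (Bmat B0 Bii i j) (x j) r)"
    using assms by (intro sum.mono_neutral_right) (auto simp: Bmat_def mv_def)
  also have "\<dots> = mv (p i) (d 0) (B0 i) (x 0) r + mv (p i) (d i) (Bii i) (x i) r"
    using assms by (simp add: Bmat_def)
  finally show "bmv {1..N} {0..N} p d (Bmat B0 Bii) x i r
      = mv (p i) (d 0) (B0 i) (x 0) r + mv (p i) (d i) (Bii i) (x i) r" .
qed

lemma bmv_Cmat:
  assumes "i \<in> {1..N}" "y i \<in> rvec (p i)"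
  shows "bmv {1..N} {1..N} p p (Cmat Cm) y i
       = (\<lambda>r. y i r - (\<Sum>j\<in>{1..N} - {i}. mv (p i) (p j) (Cm i j) (y j) r))"
proof (intro ext)
  fix r
  show "bmv {1..N} {1..N} p p (Cmat Cm) y i r
      = y i r - (\<Sum>j\<in>{1..N} - {i}. mv (p i) (p j) (Cm i j) (y j) r)"
  proof (cases "r < p i")
    case True
    have diag: "(\<Sum>j\<in>{1..N}. \<Sum>c<p j. (if i = j \<and> r = c then 1 else 0) * y j c) = y i r"
    proof -
      have "(\<Sum>j\<in>{1..N}. \<Sum>c<p j. (if i = j \<and> r = c then 1 else 0) * y j c)
          = (\<Sum>j\<in>{1..N}. if j = i then y i r else 0)"
        using True by (intro sum.cong refl) (auto simp: if_distrib[of "\<lambda>t. t * _"] cong: if_cong)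
      then show ?thesis
        using assms(1) by simp
    qed
    have off: "(\<Sum>j\<in>{1..N}. \<Sum>c<p j. (if i \<noteq> j then Cm i j r c else 0) * y j c)
        = (\<Sum>j\<in>{1..N} - {i}. \<Sum>c<p j. Cm i j r c * y j c)"
      by (intro sum.mono_neutral_cong_right) auto
    have "bmv {1..N} {1..N} p p (Cmat Cm) y i r = (\<Sum>j\<in>{1..N}. \<Sum>c<p j. Cmat Cm i j r c * y j c)"
      using assms(1) True by (simp add: bmv_def mv_def)
    also have "\<dots> = (\<Sum>j\<in>{1..N}. \<Sum>c<p j. (if i = j \<and> r = c then 1 else 0) * y j c)
        - (\<Sum>j\<in>{1..N}. \<Sum>c<p j. (if i \<noteq> j then Cm i j r c else 0) * y j c)"
      by (simp only: Cmat_def left_diff_distrib sum_subtractf)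
    also have "\<dots> = y i r - (\<Sum>j\<in>{1..N} - {i}. mv (p i) (p j) (Cm i j) (y j) r)"
      unfolding diag off using True by (simp add: mv_def)
    finally show ?thesis .
  next
    case False
    then show ?thesis
      using assms by (simp add: bmv_def mv_def rvec_def)
  qed
qed

abbreviation coupling_rhs :: "nat \<Rightarrow> (nat \<Rightarrow> nat) \<Rightarrow> (nat \<Rightarrow> nat) \<Rightarrow> bvec \<Rightarrow> (nat \<Rightarrow> mat)
    \<Rightarrow> (nat \<Rightarrow> mat) \<Rightarrow> bvec \<Rightarrow> bvec" where
  "coupling_rhs N d p a B0 Bii x \<equiv> \<lambda>i r. a i r - bmv {1..N} {0..N} p d (Bmat B0 Bii) x i r"

lemma hcpl_eq_iff_bmv_Cmat:
  assumes "i \<in> {1..N}" "y i \<in> rvec (p i)"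
  shows "y i = hcpl N d p a B0 Bii Cm i x y
     \<longleftrightarrow> bmv {1..N} {1..N} p p (Cmat Cm) y i = coupling_rhs N d p a B0 Bii x i"
  using assms
  unfolding bmv_Cmat[where i = i and y = y and p = p and N = N, OF assms] bmv_Bmat[OF assms(1)] hcpl_def
  by (auto simp: fun_eq_iff algebra_simps)

lemma prodset_mono: "(\<And>i. i \<in> I \<Longrightarrow> A i \<subseteq> A' i) \<Longrightarrow> prodset I A \<subseteq> prodset I A'"
  unfolding prodset_def by blast

lemma coupling_rhs_in_rvec:
  assumes "\<forall>i\<in>{1..N}. a i \<in> rvec (p i)"
  shows "\<forall>i\<in>{1..N}. coupling_rhs N d p a B0 Bii x i \<in> rvec (p i)"
  using assms by (auto simp: rvec_def bmv_def mv_def)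

lemma Sset_iff_solution:
  assumes Ysub: "\<forall>i\<in>{1..N}. Y i \<subseteq> rvec (p i)"
    and adim: "\<forall>i\<in>{1..N}. a i \<in> rvec (p i)"
    and Cinv_right: "is_bident N p (bprod {1..N} p (Cmat Cm) Cinv)"
    and Cinv_left: "is_bident N p (bprod {1..N} p Cinv (Cmat Cm))"
  shows "(x, y) \<in> Sset N d p X Y a B0 Bii Cm
     \<longleftrightarrow> x \<in> prodset {0..N} X \<and> y \<in> prodset {1..N} Y
         \<and> y = bmv {1..N} {1..N} p p Cinv (coupling_rhs N d p a B0 Bii x)"
proof -
  have "(\<forall>i\<in>{1..N}. y i = hcpl N d p a B0 Bii Cm i x y)
      \<longleftrightarrow> y = bmv {1..N} {1..N} p p Cinv (coupling_rhs N d p a B0 Bii x)"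
    if y: "y \<in> prodset {1..N} Y"
  proof -
    have shaped: "y \<in> prodset {1..N} (\<lambda>i. rvec (p i))"
      using prodset_mono[of "{1..N}" Y "\<lambda>i. rvec (p i)"] Ysub y by blast
    then have "(\<forall>i\<in>{1..N}. y i = hcpl N d p a B0 Bii Cm i x y)
        \<longleftrightarrow> (\<forall>i\<in>{1..N}. bmv {1..N} {1..N} p p (Cmat Cm) y i = coupling_rhs N d p a B0 Bii x i)"
      by (intro ball_cong refl hcpl_eq_iff_bmv_Cmat) (auto simp: prodset_def)
    also have "\<dots> \<longleftrightarrow> y = bmv {1..N} {1..N} p p Cinv (coupling_rhs N d p a B0 Bii x)"
      by (rule bmv_inverse_solve[OF Cinv_right Cinv_left shaped coupling_rhs_in_rvec[OF adim]])
    finally show ?thesis .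
  qed
  moreover have "(x, y) \<in> Sset N d p X Y a B0 Bii Cm
      \<longleftrightarrow> x \<in> prodset {0..N} X \<and> y \<in> prodset {1..N} Y
          \<and> (\<forall>i\<in>{1..N}. y i = hcpl N d p a B0 Bii Cm i x y)"
    unfolding Sset_def by simp
  ultimately show ?thesis
    by blast
qed

lemma PiX_eq_fst_Sset:
  assumes "\<forall>i\<in>{1..N}. Y i \<subseteq> rvec (p i)" "\<forall>i\<in>{1..N}. a i \<in> rvec (p i)"
    "is_bident N p (bprod {1..N} p (Cmat Cm) Cinv)" "is_bident N p (bprod {1..N} p Cinv (Cmat Cm))"
  shows "PiX N d p X Y a B0 Bii Cinv = fst ` Sset N d p X Y a B0 Bii Cm"
  unfolding PiX_def using Sset_iff_solution[OF assms] by force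

lemma Lspec_on_Sset:
  assumes "\<forall>i\<in>{1..N}. Y i \<subseteq> rvec (p i)" "\<forall>i\<in>{1..N}. a i \<in> rvec (p i)"
    "is_bident N p (bprod {1..N} p (Cmat Cm) Cinv)" "is_bident N p (bprod {1..N} p Cinv (Cmat Cm))"
    and S: "(x, y) \<in> Sset N d p X Y a B0 Bii Cm"
  shows "Lspec N d p a B0 Bii Cinv x y = x"
proof -
  have x: "x \<in> prodset {0..N} X"
    and y_sol: "y = bmv {1..N} {1..N} p p Cinv (coupling_rhs N d p a B0 Bii x)"
    using S Sset_iff_solution[OF assms(1-4)] by auto
  note y_sol
  also have "\<dots> = (\<lambda>i r. alpha N p a Cinv i r + bmv {1..N} {0..N} p d (beta N p B0 Bii Cinv) x i r)"
    unfolding bmv_diff alpha_def beta_def bmv_uminus_left by (simp add: bmv_bmv)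
  finally have y: "y i r = alpha N p a Cinv i r + bmv {1..N} {0..N} p d (beta N p B0 Bii Cinv) x i r"
    for i r
    by simp
  show ?thesis
    using x by (intro ext) (auto simp: Lspec_def y bmv_def prodset_def)
qed

lemma MDO_sol_iff_P_sol_on_fst_Sset:
  assumes L_S: "\<forall>(x, y)\<in>Sset N d p X Y a B0 Bii Cm. L x y = x"
  shows "MDO_sol N d p q X Y f g0 g a B0 Bii Cm L x y
     \<longleftrightarrow> (x, y) \<in> Sset N d p X Y a B0 Bii Cm
         \<and> P_sol_on N q f g0 g (fst ` Sset N d p X Y a B0 Bii Cm) x"
proof -
  have L: "L x' y' = x'" if "(x', y') \<in> Sset N d p X Y a B0 Bii Cm" for x' y'
    using L_S that by blast
  have feas: "MDO_feas N d p q X Y g0 g a B0 Bii Cm L x' y'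
      \<longleftrightarrow> (x', y') \<in> Sset N d p X Y a B0 Bii Cm \<and> gfeas N q g0 g x'" for x' y'
    using L unfolding MDO_feas_def Sset_def by auto
  have minimal: "(\<forall>x' y'. (x', y') \<in> Sset N d p X Y a B0 Bii Cm \<and> gfeas N q g0 g x'
        \<longrightarrow> f (L x y) \<le> f (L x' y'))
      \<longleftrightarrow> (\<forall>x'\<in>fst ` Sset N d p X Y a B0 Bii Cm. gfeas N q g0 g x' \<longrightarrow> f x \<le> f x')"
    if "(x, y) \<in> Sset N d p X Y a B0 Bii Cm"
    using L[OF that] L by force
  show ?thesis
    unfolding MDO_sol_def P_sol_on_def feas
    using minimal by (auto intro: image_eqI[of x fst "(x, y)"])
qed

theorem proposition3:
  fixes N :: nat and d p q :: "nat \<Rightarrow> nat"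
    and X Y :: "nat \<Rightarrow> vec set"
    and f :: "bvec \<Rightarrow> real" and g0 :: "bvec \<Rightarrow> vec" and g :: "nat \<Rightarrow> vec \<Rightarrow> vec \<Rightarrow> vec"
    and a :: bvec and B0 Bii :: "nat \<Rightarrow> mat" and Cm Cinv :: bmat
    and L :: "bvec \<Rightarrow> bvec \<Rightarrow> bvec"
  assumes N2: "N \<ge> 2"
    and dpos: "\<forall>i\<in>{0..N}. d i \<ge> 1" and ppos: "\<forall>i\<in>{1..N}. p i \<ge> 1" and qpos: "\<forall>i\<in>{0..N}. q i \<ge> 1"
    and Xsub: "\<forall>i\<in>{0..N}. X i \<subseteq> rvec (d i)"
    and Ysub: "\<forall>i\<in>{1..N}. Y i \<subseteq> rvec (p i)"
    and g0dim: "\<forall>x\<in>prodset {0..N} X. g0 x \<in> rvec (q 0)"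
    and gdim: "\<forall>i\<in>{1..N}. \<forall>u\<in>X 0. \<forall>v\<in>X i. g i u v \<in> rvec (q i)"
    and adim: "\<forall>i\<in>{1..N}. a i \<in> rvec (p i)"
    and Cinv_right: "is_bident N p (bprod {1..N} p (Cmat Cm) Cinv)"
    and Cinv_left: "is_bident N p (bprod {1..N} p Cinv (Cmat Cm))"
    and L_S: "\<forall>(x, y)\<in>Sset N d p X Y a B0 Bii Cm. L x y = x"
  shows "(\<forall>x y. MDO_sol N d p q X Y f g0 g a B0 Bii Cm L x y \<longleftrightarrow>
            (x, y) \<in> Sset N d p X Y a B0 Bii Cm \<and>
            P_sol_on N q f g0 g (PiX N d p X Y a B0 Bii Cinv) x)
       \<and> ((\<forall>i\<in>{1..N}. p i = d i) \<longrightarrow>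
            (\<forall>(x, y)\<in>Sset N d p X Y a B0 Bii Cm. Lspec N d p a B0 Bii Cinv x y = x))"
  using MDO_sol_iff_P_sol_on_fst_Sset[OF L_S]
    PiX_eq_fst_Sset[OF Ysub adim Cinv_right Cinv_left]
    Lspec_on_Sset[OF Ysub adim Cinv_right Cinv_left]
  by auto

end
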